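(* Let $n$ be a positive even integer and let $G$ be a $2r$-regular graph ($r\ge1$) of order $m$ with chromatic number $3$, having a proper $3$-coloring such that for each vertex $v$, $N(v)$ can be partitioned into two monochromatic subsets, each of size $r$, of two different colors. Then $\chi_{ld}(G[\overline{K_{n}}]) = 3$.
   Context: All graphs are finite, simple and undirected. For a graph $G=(V,E)$ of order $N$ without isolated vertices, a bijection $f\colon V\to\{1,2,\dots,N\}$ is a local distance antimagic labeling if $w(u)\neq w(v)$ for every edge $uv$, where $w(u)=\sum_{x\in N(u)}f(x)$ and $N(u)$ is the open neighborhood of $u$. $\chi_{ld}(G)$ is the minimum number of distinct weights over all local distance antimagic labelings of $G$. $\overline{K_n}$ is the edgeless graph on $n$ vertices. The lexicographic product $G[H]$ has vertex set $V(G)\times V(H)$, with $(g,h)$ adjacent to $(g',h')$ iff $gg'\in E(G)$, or $g=g'$ and $hh'\in E(H)$. *)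

theory Defs
  imports Main
begin

definition simple_graph :: "'a set \<Rightarrow> ('a \<Rightarrow> 'a \<Rightarrow> bool) \<Rightarrow> bool" where
  "simple_graph V E \<longleftrightarrow> finite V \<and> (\<forall>u v. E u v \<longrightarrow> u \<in> V \<and> v \<in> V)
     \<and> (\<forall>u v. E u v \<longrightarrow> E v u) \<and> (\<forall>u. \<not> E u u)"

definition nbhd :: "'a set \<Rightarrow> ('a \<Rightarrow> 'a \<Rightarrow> bool) \<Rightarrow> 'a \<Rightarrow> 'a set" where
  "nbhd V E u = {x \<in> V. E u x}"

definition no_isolated :: "'a set \<Rightarrow> ('a \<Rightarrow> 'a \<Rightarrow> bool) \<Rightarrow> bool" where
  "no_isolated V E \<longleftrightarrow> (\<forall>u\<in>V. nbhd V E u \<noteq> {})"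

definition regular :: "'a set \<Rightarrow> ('a \<Rightarrow> 'a \<Rightarrow> bool) \<Rightarrow> nat \<Rightarrow> bool" where
  "regular V E d \<longleftrightarrow> (\<forall>u\<in>V. card (nbhd V E u) = d)"

definition proper_coloring :: "'a set \<Rightarrow> ('a \<Rightarrow> 'a \<Rightarrow> bool) \<Rightarrow> ('a \<Rightarrow> nat) \<Rightarrow> nat \<Rightarrow> bool" where
  "proper_coloring V E c k \<longleftrightarrow> (\<forall>v\<in>V. c v < k) \<and> (\<forall>u v. E u v \<longrightarrow> c u \<noteq> c v)"

definition chromatic_number :: "'a set \<Rightarrow> ('a \<Rightarrow> 'a \<Rightarrow> bool) \<Rightarrow> nat" where
  "chromatic_number V E = (LEAST k. \<exists>c. proper_coloring V E c k)"

definition weight :: "'a set \<Rightarrow> ('a \<Rightarrow> 'a \<Rightarrow> bool) \<Rightarrow> ('a \<Rightarrow> nat) \<Rightarrow> 'a \<Rightarrow> nat" where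
  "weight V E f u = (\<Sum>x\<in>nbhd V E u. f x)"

definition ld_antimagic :: "'a set \<Rightarrow> ('a \<Rightarrow> 'a \<Rightarrow> bool) \<Rightarrow> ('a \<Rightarrow> nat) \<Rightarrow> bool" where
  "ld_antimagic V E f \<longleftrightarrow> bij_betw f V {1..card V}
     \<and> (\<forall>u v. E u v \<longrightarrow> weight V E f u \<noteq> weight V E f v)"

definition chi_ld :: "'a set \<Rightarrow> ('a \<Rightarrow> 'a \<Rightarrow> bool) \<Rightarrow> nat" where
  "chi_ld V E = Min {card (weight V E f ` V) | f. ld_antimagic V E f}"

definition lex_V :: "'a set \<Rightarrow> 'b set \<Rightarrow> ('a \<times> 'b) set" where
  "lex_V VG VH = VG \<times> VH"

definition lex_E :: "('a \<Rightarrow> 'a \<Rightarrow> bool) \<Rightarrow> ('b \<Rightarrow> 'b \<Rightarrow> bool) \<Rightarrow> 'a \<times> 'b \<Rightarrow> 'a \<times> 'b \<Rightarrow> bool" where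
  "lex_E EG EH p q \<longleftrightarrow> EG (fst p) (fst q) \<or> (fst p = fst q \<and> EH (snd p) (snd q))"

definition empty_V :: "nat \<Rightarrow> nat set" where "empty_V n = {0..<n}"
definition empty_E :: "nat \<Rightarrow> nat \<Rightarrow> bool" where "empty_E u v = False"

end

theory Submission
  imports Defs
begin

(* Lower bound: for an edge uv of G the vertices (u,0) and (v,0) of G[K_n-bar] are adjacent, so
   v \<mapsto> w(v,0) is a proper colouring of G and every labelling has at least \<chi>(G) = 3 weights.

   Upper bound: let m = |V| and give the layer V \<times> {j} the labels jm+1 .. jm+m, through a
   bijection \<sigma> onto {0..m-1} on even layers and \<rho> on odd layers. If \<sigma>(u) + \<rho>(u) depends
   injectively on the colour of u only, then so does the column sum of u, say S(c u). The
   neighbourhood of v consists of r vertices of each of the two colours other than c v, so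
   w(v,i) = r (S 0 + S 1 + S 2 - S (c v)): three weights, distinct on adjacent vertices.
   Take \<sigma> to enumerate the colour classes C0, C1, C2 in this order, and \<rho> to be the reversal
   of the enumeration in the order C0, C2, C1 (same order inside each class); then
   \<sigma> + \<rho> is m-1, m-1-|C2| and m-1+|C1| on the three classes. *)

lemma nbhd_lex_empty:
  "nbhd (lex_V V (empty_V n)) (lex_E E empty_E) (v, i) = nbhd V E v \<times> {0..<n}"
  by (auto simp: nbhd_def lex_V_def lex_E_def empty_E_def empty_V_def)

lemma weight_lex_empty:
  "weight (lex_V V (empty_V n)) (lex_E E empty_E) f (v, i) = (\<Sum>u\<in>nbhd V E v. \<Sum>j<n. f (u, j))"
  unfolding weight_def nbhd_lex_empty by (simp add: sum.cartesian_product atLeast0LessThan)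

lemma chromatic_number_le:
  "proper_coloring V E c k \<Longrightarrow> chromatic_number V E \<le> k"
  unfolding chromatic_number_def by (rule Least_le) blast

lemma chromatic_number_empty:
  "proper_coloring {} E c k \<Longrightarrow> chromatic_number {} E = 0"
  using chromatic_number_le[of "{}" E c 0] by (simp add: proper_coloring_def)

lemma chromatic_number_le_card_image:
  assumes "simple_graph V E" and distinct: "\<And>u v. E u v \<Longrightarrow> g u \<noteq> g v"
  shows "chromatic_number V E \<le> card (g ` V)"
proof -
  have "finite (g ` V)" using assms(1) by (simp add: simple_graph_def)
  then obtain h where h: "bij_betw h (g ` V) {0..<card (g ` V)}"
    using ex_bij_betw_finite_nat by blast
  have "proper_coloring V E (h \<circ> g) (card (g ` V))"
    unfolding proper_coloring_def
  proof safe
    fix v assume "v \<in> V"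
    then show "(h \<circ> g) v < card (g ` V)" using h by (auto simp: bij_betw_def)
  next
    fix u v assume "E u v" and "(h \<circ> g) u = (h \<circ> g) v"
    moreover have "u \<in> V" "v \<in> V" using \<open>E u v\<close> assms(1) by (auto simp: simple_graph_def)
    ultimately show False
      using distinct h by (auto simp: bij_betw_def inj_on_def)
  qed
  then show ?thesis by (rule chromatic_number_le)
qed

lemma chromatic_number_le_card_weights_lex_empty:
  assumes "simple_graph V E" "n > 0"
    and "ld_antimagic (lex_V V (empty_V n)) (lex_E E empty_E) f"
  shows "chromatic_number V E
           \<le> card (weight (lex_V V (empty_V n)) (lex_E E empty_E) f ` lex_V V (empty_V n))"
proof -
  let ?w = "weight (lex_V V (empty_V n)) (lex_E E empty_E) f"
  have "chromatic_number V E \<le> card ((\<lambda>v. ?w (v, 0)) ` V)"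
    using assms(3) by (intro chromatic_number_le_card_image[OF assms(1)])
      (auto simp: ld_antimagic_def lex_E_def)
  also have "\<dots> \<le> card (?w ` lex_V V (empty_V n))"
    using assms(1,2) by (intro card_mono) (auto simp: simple_graph_def lex_V_def empty_V_def)
  finally show ?thesis .
qed

lemma chi_ld_eqI:
  assumes "finite V" "ld_antimagic V E f" "card (weight V E f ` V) = k"
    and "\<And>g. ld_antimagic V E g \<Longrightarrow> k \<le> card (weight V E g ` V)"
  shows "chi_ld V E = k"
  unfolding chi_ld_def
proof (rule Min_eqI)
  have "{card (weight V E g ` V) | g. ld_antimagic V E g} \<subseteq> {..card V}"
    using card_image_le[OF assms(1)] by auto
  then show "finite {card (weight V E g ` V) | g. ld_antimagic V E g}"
    by (rule finite_subset) simp
qed (use assms in auto)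

lemma bij_betw_append_enum:
  fixes f g :: "'a \<Rightarrow> nat"
  assumes "bij_betw f A {0..<a}" "bij_betw g B {0..<b}" "A \<inter> B = {}"
  shows "bij_betw (\<lambda>x. if x \<in> A then f x else a + g x) (A \<union> B) {0..<a + b}"
proof -
  have "bij_betw (\<lambda>x. if x \<in> A then f x else a + g x) A {0..<a}"
    using assms(1) by (rule bij_betw_cong[THEN iffD1, rotated]) simp
  moreover have "bij_betw (\<lambda>x. if x \<in> A then f x else a + g x) B {a..<a + b}"
  proof -
    have "bij_betw ((+) a \<circ> g) B {a..<a + b}"
      using assms(2) image_add_atLeastLessThan[of a 0 b]
      by (intro bij_betw_trans) (auto simp: bij_betw_def add.commute)
    moreover have "x \<in> B \<Longrightarrow> (if x \<in> A then f x else a + g x) = ((+) a \<circ> g) x" for x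
      using assms(3) by auto
    ultimately show ?thesis by (simp cong: bij_betw_cong)
  qed
  ultimately have "bij_betw (\<lambda>x. if x \<in> A then f x else a + g x) (A \<union> B) ({0..<a} \<union> {a..<a + b})"
    by (rule bij_betw_combine) auto
  then show ?thesis by (simp add: ivl_disj_un_two(3))
qed

lemma bij_betw_reverse_enum:
  fixes f :: "'a \<Rightarrow> nat"
  assumes "bij_betw f A {0..<m}"
  shows "bij_betw (\<lambda>x. m - 1 - f x) A {0..<m}"
proof -
  have "inj_on (\<lambda>i. m - 1 - i) {0..<m}" by (rule inj_onI) (clarsimp; arith)
  then have "bij_betw (\<lambda>i. m - 1 - i) {0..<m} {0..<m}"
    by (simp add: bij_betw_def endo_inj_surj[of "{0..<m}"] image_subset_iff)
  from bij_betw_trans[OF assms this] show ?thesis by (simp add: comp_def)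
qed

lemma sum_alternating:
  fixes a b :: "'a::comm_semiring_1"
  assumes "even n"
  shows "(\<Sum>j<n. if even j then a else b) = of_nat (n div 2) * (a + b)"
proof -
  obtain k where "n = 2 * k" using assms by blast
  moreover have "(\<Sum>j<2 * k. if even j then a else b) = of_nat k * (a + b)"
    by (induction k) (simp_all add: algebra_simps)
  ultimately show ?thesis by simp
qed

lemma bij_betw_layered_labelling:
  fixes \<pi> :: "nat \<Rightarrow> 'a \<Rightarrow> nat"
  assumes \<pi>: "\<And>j. j < n \<Longrightarrow> bij_betw (\<pi> j) V {0..<m}"
  shows "bij_betw (\<lambda>(u, j). j * m + \<pi> j u + 1) (V \<times> {0..<n}) {1..n * m}"
proof (rule bij_betw_imageI)
  have \<pi>_lt: "\<pi> j u < m" if "j < n" "u \<in> V" for j u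
    using \<pi>[OF that(1)] that(2) by (auto simp: bij_betw_def)
  show "inj_on (\<lambda>(u, j). j * m + \<pi> j u + 1) (V \<times> {0..<n})"
  proof (rule inj_onI, clarsimp)
    fix u j u' j'
    assume uj: "u \<in> V" "j < n" "u' \<in> V" "j' < n"
      and eq: "j * m + \<pi> j u = j' * m + \<pi> j' u'"
    have "(j * m + \<pi> j u) div m = j" "(j' * m + \<pi> j' u') div m = j'"
      using \<pi>_lt[OF uj(2,1)] \<pi>_lt[OF uj(4,3)] by simp_all
    then have "j = j'" using eq by simp
    moreover from this have "\<pi> j u = \<pi> j u'" using eq by simp
    ultimately show "u = u' \<and> j = j'"
      using \<pi>[OF \<open>j < n\<close>] uj by (auto simp: bij_betw_def inj_on_def)
  qed
  show "(\<lambda>(u, j). j * m + \<pi> j u + 1) ` (V \<times> {0..<n}) = {1..n * m}"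
  proof
    show "(\<lambda>(u, j). j * m + \<pi> j u + 1) ` (V \<times> {0..<n}) \<subseteq> {1..n * m}"
    proof clarsimp
      fix u j assume "u \<in> V" "j < n"
      then have "j * m + \<pi> j u + 1 \<le> Suc j * m" using \<pi>_lt[of j u] by simp
      also have "\<dots> \<le> n * m" using \<open>j < n\<close> by (intro mult_le_mono1) simp
      finally show "Suc (j * m + \<pi> j u) \<le> n * m" by simp
    qed
    show "{1..n * m} \<subseteq> (\<lambda>(u, j). j * m + \<pi> j u + 1) ` (V \<times> {0..<n})"
    proof
      fix k assume k: "k \<in> {1..n * m}"
      define j where "j = (k - 1) div m"
      have "m > 0" using k by (auto intro: gr0I)
      have "j < n" using k by (auto simp: j_def less_mult_imp_div_less)
      moreover have "(k - 1) mod m \<in> \<pi> j ` V"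
        using \<pi>[OF \<open>j < n\<close>] \<open>m > 0\<close> by (simp add: bij_betw_def)
      then obtain u where "u \<in> V" "\<pi> j u = (k - 1) mod m" by auto
      moreover have "k = j * m + (k - 1) mod m + 1" using k by (simp add: j_def)
      ultimately show "k \<in> (\<lambda>(u, j). j * m + \<pi> j u + 1) ` (V \<times> {0..<n})"
        by (auto intro!: image_eqI[where x = "(u, j)"])
    qed
  qed
qed

lemma ex_colour_class_enumerations:
  fixes c :: "'a \<Rightarrow> nat"
  assumes "finite V" and colours: "\<forall>u\<in>V. c u < 3"
    and "\<exists>u\<in>V. c u = 1" "\<exists>u\<in>V. c u = 2"
  obtains \<sigma> \<rho> :: "'a \<Rightarrow> nat" and \<Delta> :: "nat \<Rightarrow> nat"
  where "bij_betw \<sigma> V {0..<card V}" "bij_betw \<rho> V {0..<card V}"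
    "\<And>u. u \<in> V \<Longrightarrow> \<sigma> u + \<rho> u = \<Delta> (c u)" "inj_on \<Delta> {0..<3}"
proof -
  define C where "C i = {u \<in> V. c u = i}" for i
  define A where "A i = card (C i)" for i
  let ?m = "card V"
  have "\<forall>i. \<exists>h. bij_betw h (C i) {0..<A i}"
    using assms(1) by (auto simp: C_def A_def intro: ex_bij_betw_finite_nat)
  then obtain e where e: "\<And>i. bij_betw (e i) (C i) {0..<A i}" by metis
  have e_lt: "e (c u) u < A (c u)" if "u \<in> V" for u
    using e[of "c u"] that by (auto simp: bij_betw_def C_def)
  have V: "V = C 0 \<union> (C 1 \<union> C 2)" "V = C 0 \<union> (C 2 \<union> C 1)"
    using colours by (auto simp: C_def)
  have fin: "finite (C i)" for i using assms(1) by (simp add: C_def)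
  have "C 1 \<inter> C 2 = {}" "C 0 \<inter> (C 1 \<union> C 2) = {}" by (auto simp: C_def)
  then have m: "?m = A 0 + (A 1 + A 2)"
    unfolding A_def by (subst V(1)) (simp add: card_Un_disjoint fin)
  have A_pos: "A 1 > 0" "A 2 > 0"
    using assms(1,3,4) by (auto simp: A_def C_def card_gt_0_iff)
  define \<sigma> where "\<sigma> u = (if u \<in> C 0 then e 0 u else A 0 + (if u \<in> C 1 then e 1 u else A 1 + e 2 u))"
    for u
  define \<tau> where "\<tau> u = (if u \<in> C 0 then e 0 u else A 0 + (if u \<in> C 2 then e 2 u else A 2 + e 1 u))"
    for u
  define \<Delta> where "\<Delta> (k::nat) = (if k = 0 then ?m - 1 else if k = 1 then ?m - 1 - A 2 else ?m - 1 + A 1)"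
    for k
  have "bij_betw \<sigma> (C 0 \<union> (C 1 \<union> C 2)) {0..<A 0 + (A 1 + A 2)}"
    unfolding \<sigma>_def by (intro bij_betw_append_enum e) (auto simp: C_def)
  then have "bij_betw \<sigma> V {0..<?m}" by (simp only: flip: V(1) m)
  moreover have "bij_betw \<tau> (C 0 \<union> (C 2 \<union> C 1)) {0..<A 0 + (A 2 + A 1)}"
    unfolding \<tau>_def by (intro bij_betw_append_enum e) (auto simp: C_def)
  then have "bij_betw \<tau> V {0..<?m}" by (simp only: add.commute[of "A 2"] flip: V(2) m)
  then have "bij_betw (\<lambda>u. ?m - 1 - \<tau> u) V {0..<?m}" by (rule bij_betw_reverse_enum)
  moreover have "\<sigma> u + (?m - 1 - \<tau> u) = \<Delta> (c u)" if "u \<in> V" for u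
    using that colours e_lt[OF that] m
    by (auto simp: \<sigma>_def \<tau>_def \<Delta>_def C_def less_Suc_eq numeral_3_eq_3)
  moreover have "inj_on \<Delta> {0..<3}"
    using A_pos m by (auto simp: inj_on_def \<Delta>_def less_Suc_eq numeral_3_eq_3)
  ultimately show ?thesis using that by blast
qed

definition nbhd_two_colours ::
    "'a set \<Rightarrow> ('a \<Rightarrow> 'a \<Rightarrow> bool) \<Rightarrow> ('a \<Rightarrow> nat) \<Rightarrow> nat \<Rightarrow> 'a \<Rightarrow> bool" where
  "nbhd_two_colours V E c r v \<longleftrightarrow> (\<exists>a b. a \<noteq> b
     \<and> nbhd V E v = {u \<in> nbhd V E v. c u = a} \<union> {u \<in> nbhd V E v. c u = b}
     \<and> card {u \<in> nbhd V E v. c u = a} = r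
     \<and> card {u \<in> nbhd V E v. c u = b} = r)"

lemma nbhd_two_colours_complement:
  assumes c: "proper_coloring V E c 3" and "nbhd_two_colours V E c r v" "r \<ge> 1" "v \<in> V"
  obtains a b where "{a, b, c v} = {0..<3}" "a \<noteq> b" "a \<noteq> c v" "b \<noteq> c v"
    "nbhd V E v = {u \<in> nbhd V E v. c u = a} \<union> {u \<in> nbhd V E v. c u = b}"
    "{u \<in> nbhd V E v. c u = a} \<noteq> {}" "card {u \<in> nbhd V E v. c u = a} = r"
    "{u \<in> nbhd V E v. c u = b} \<noteq> {}" "card {u \<in> nbhd V E v. c u = b} = r"
proof -
  obtain a b where ab: "a \<noteq> b"
    "nbhd V E v = {u \<in> nbhd V E v. c u = a} \<union> {u \<in> nbhd V E v. c u = b}"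
    "card {u \<in> nbhd V E v. c u = a} = r" "card {u \<in> nbhd V E v. c u = b} = r"
    using assms(2) by (auto simp: nbhd_two_colours_def)
  then have nonempty: "{u \<in> nbhd V E v. c u = a} \<noteq> {}" "{u \<in> nbhd V E v. c u = b} \<noteq> {}"
    using \<open>r \<ge> 1\<close> by (metis card.empty not_one_le_zero)+
  then obtain ua ub where "ua \<in> V" "E v ua" "c ua = a" "ub \<in> V" "E v ub" "c ub = b"
    by (auto simp: nbhd_def)
  with c \<open>v \<in> V\<close> have "a \<noteq> c v" "b \<noteq> c v" "a < 3" "b < 3" "c v < 3"
    by (auto simp: proper_coloring_def) metis+
  moreover from this ab(1) have "card {a, b, c v} = card {0..<3::nat}" by simp
  ultimately have "{a, b, c v} = {0..<3}" by (intro card_subset_eq) auto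
  with ab nonempty \<open>a \<noteq> c v\<close> \<open>b \<noteq> c v\<close> show ?thesis using that by blast
qed

lemma nbhd_two_colours_all_colours_occur:
  assumes "proper_coloring V E c 3" "nbhd_two_colours V E c r v" "r \<ge> 1" "v \<in> V" "k < 3"
  shows "\<exists>u\<in>V. c u = k"
proof -
  obtain a b where "{a, b, c v} = {0..<3}"
    and "nbhd V E v = {u \<in> nbhd V E v. c u = a} \<union> {u \<in> nbhd V E v. c u = b}"
    and "a \<noteq> b" "a \<noteq> c v" "b \<noteq> c v"
    and a: "{u \<in> nbhd V E v. c u = a} \<noteq> {}" "card {u \<in> nbhd V E v. c u = a} = r"
    and b: "{u \<in> nbhd V E v. c u = b} \<noteq> {}" "card {u \<in> nbhd V E v. c u = b} = r"
    by (rule nbhd_two_colours_complement[OF assms(1-4)])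
  then have "k \<in> {a, b, c v}" using \<open>k < 3\<close> by simp
  then show ?thesis using \<open>v \<in> V\<close> a(1) b(1) by (auto simp: nbhd_def)
qed

lemma weight_lex_empty_by_colour:
  assumes "simple_graph V E" "proper_coloring V E c 3" "r \<ge> 1"
    and "nbhd_two_colours V E c r v" "v \<in> V"
    and column_sums: "\<forall>u\<in>V. (\<Sum>j<n. f (u, j)) = S (c u)"
  shows "weight (lex_V V (empty_V n)) (lex_E E empty_E) f (v, i) + r * S (c v)
           = r * sum S {0..<3}"
proof -
  obtain a b where abc: "{a, b, c v} = {0..<3}" "a \<noteq> b" "a \<noteq> c v" "b \<noteq> c v"
    and N: "nbhd V E v = {u \<in> nbhd V E v. c u = a} \<union> {u \<in> nbhd V E v. c u = b}"
    and "{u \<in> nbhd V E v. c u = a} \<noteq> {}" and card_a: "card {u \<in> nbhd V E v. c u = a} = r"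
    and "{u \<in> nbhd V E v. c u = b} \<noteq> {}" and card_b: "card {u \<in> nbhd V E v. c u = b} = r"
    by (rule nbhd_two_colours_complement[OF assms(2,4,3,5)])
  have "finite (nbhd V E v)" using assms(1) by (simp add: simple_graph_def nbhd_def)
  have "weight (lex_V V (empty_V n)) (lex_E E empty_E) f (v, i) = (\<Sum>u\<in>nbhd V E v. S (c u))"
    unfolding weight_lex_empty using column_sums by (intro sum.cong) (auto simp: nbhd_def)
  also have "\<dots> = (\<Sum>u\<in>{u \<in> nbhd V E v. c u = a}. S (c u))
                    + (\<Sum>u\<in>{u \<in> nbhd V E v. c u = b}. S (c u))"
    using \<open>finite (nbhd V E v)\<close> \<open>a \<noteq> b\<close> by (subst N) (rule sum.union_disjoint; auto)
  also have "\<dots> = r * S a + r * S b" using card_a card_b by simp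
  finally have "weight (lex_V V (empty_V n)) (lex_E E empty_E) f (v, i) + r * S (c v)
                  = r * (S a + S b + S (c v))"
    by (simp add: algebra_simps)
  also have "S a + S b + S (c v) = sum S {0..<3}"
    using abc by (simp flip: abc(1) add: add.assoc)
  finally show ?thesis .
qed

lemma ex_labelling_colour_column_sums:
  fixes c :: "'a \<Rightarrow> nat"
  assumes "finite V" "\<forall>u\<in>V. c u < 3" "\<exists>u\<in>V. c u = 1" "\<exists>u\<in>V. c u = 2"
    and "n > 0" "even n"
  obtains f :: "'a \<times> nat \<Rightarrow> nat" and S :: "nat \<Rightarrow> nat"
  where "bij_betw f (V \<times> {0..<n}) {1..n * card V}"
    "\<forall>u\<in>V. (\<Sum>j<n. f (u, j)) = S (c u)" "inj_on S {0..<3}"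
proof -
  obtain \<sigma> \<rho> :: "'a \<Rightarrow> nat" and \<Delta> :: "nat \<Rightarrow> nat"
    where \<sigma>: "bij_betw \<sigma> V {0..<card V}" and \<rho>: "bij_betw \<rho> V {0..<card V}"
      and \<Delta>: "\<And>u. u \<in> V \<Longrightarrow> \<sigma> u + \<rho> u = \<Delta> (c u)" "inj_on \<Delta> {0..<3}"
    using ex_colour_class_enumerations[OF assms(1-4)] by blast
  define \<pi> where "\<pi> j = (if even j then \<sigma> else \<rho>)" for j :: nat
  define f where "f = (\<lambda>(u, j). j * card V + \<pi> j u + 1)"
  define S where "S k = (\<Sum>j<n. j * card V + 1) + n div 2 * \<Delta> k" for k
  have bij: "bij_betw f (V \<times> {0..<n}) {1..n * card V}"
    unfolding f_def using \<sigma> \<rho> by (intro bij_betw_layered_labelling) (simp add: \<pi>_def)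
  moreover have "\<forall>u\<in>V. (\<Sum>j<n. f (u, j)) = S (c u)"
  proof
    fix u assume "u \<in> V"
    have "(\<Sum>j<n. f (u, j)) = (\<Sum>j<n. (j * card V + 1) + \<pi> j u)"
      by (simp add: f_def)
    also have "\<dots> = (\<Sum>j<n. j * card V + 1) + (\<Sum>j<n. \<pi> j u)"
      by (rule sum.distrib)
    also have "(\<Sum>j<n. \<pi> j u) = (\<Sum>j<n. if even j then \<sigma> u else \<rho> u)"
      unfolding \<pi>_def by (intro sum.cong) simp_all
    also have "\<dots> = n div 2 * \<Delta> (c u)"
      using sum_alternating[OF \<open>even n\<close>, of "\<sigma> u" "\<rho> u"] \<Delta>(1)[OF \<open>u \<in> V\<close>]
      by simp
    finally show "(\<Sum>j<n. f (u, j)) = S (c u)" by (simp add: S_def)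
  qed
  moreover have "inj_on S {0..<3}"
  proof (rule inj_onI)
    fix k l assume "k \<in> {0..<3}" "l \<in> {0..<3}" "S k = S l"
    moreover have "n div 2 > 0" using assms(5,6) by auto
    ultimately show "k = l" using \<Delta>(2) by (simp add: S_def inj_on_def)
  qed
  ultimately show ?thesis by (rule that)
qed

lemma ld_antimagic_lex_empty_of_colour_column_sums:
  assumes "simple_graph V E" "proper_coloring V E c 3" "r \<ge> 1"
    and split: "\<forall>v\<in>V. nbhd_two_colours V E c r v"
    and f: "bij_betw f (V \<times> {0..<n}) {1..n * card V}"
    and column_sums: "\<forall>u\<in>V. (\<Sum>j<n. f (u, j)) = S (c u)"
    and "inj_on S {0..<3}"
  shows "ld_antimagic (lex_V V (empty_V n)) (lex_E E empty_E) f"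
    and "card (weight (lex_V V (empty_V n)) (lex_E E empty_E) f ` lex_V V (empty_V n)) \<le> 3"
proof -
  let ?w = "weight (lex_V V (empty_V n)) (lex_E E empty_E) f"
  define W where "W k = r * sum S {0..<3} - r * S k" for k
  have colours: "c v < 3" if "v \<in> V" for v
    using assms(2) that by (simp add: proper_coloring_def)
  have weight: "?w (v, i) = W (c v)" if "v \<in> V" for v i
    using weight_lex_empty_by_colour[OF assms(1-3) split[rule_format, OF that] that column_sums]
    unfolding W_def by (metis add_diff_cancel_right')
  have "inj_on W {0..<3}"
  proof (rule inj_onI)
    fix k l :: nat assume "k \<in> {0..<3}" "l \<in> {0..<3}" "W k = W l"
    moreover from this have "r * S k \<le> r * sum S {0..<3}" "r * S l \<le> r * sum S {0..<3}"
      by (simp_all add: member_le_sum)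
    ultimately have "r * S k = r * S l" unfolding W_def by linarith
    then have "S k = S l" using \<open>r \<ge> 1\<close> by simp
    with \<open>inj_on S {0..<3}\<close> \<open>k \<in> _\<close> \<open>l \<in> _\<close> show "k = l"
      by (auto dest: inj_onD)
  qed
  have lex_V: "lex_V V (empty_V n) = V \<times> {0..<n}" by (simp add: lex_V_def empty_V_def)
  show "ld_antimagic (lex_V V (empty_V n)) (lex_E E empty_E) f"
    unfolding ld_antimagic_def
  proof safe
    have "card (V \<times> {0..<n}) = n * card V" using assms(1) by (simp add: card_cartesian_product)
    then show "bij_betw f (lex_V V (empty_V n)) {1..card (lex_V V (empty_V n))}"
      using f by (simp add: lex_V)
  next
    fix u i v j assume "lex_E E empty_E (u, i) (v, j)" and same: "?w (u, i) = ?w (v, j)"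
    then have "E u v" by (simp add: lex_E_def empty_E_def)
    with assms(1,2) have "u \<in> V" "v \<in> V" "c u \<noteq> c v"
      by (auto simp: simple_graph_def proper_coloring_def)
    moreover have "W (c u) = W (c v)" using same weight \<open>u \<in> V\<close> \<open>v \<in> V\<close> by simp
    ultimately show False
      using \<open>inj_on W {0..<3}\<close> colours by (simp add: inj_on_def)
  qed
  have "?w ` lex_V V (empty_V n) \<subseteq> W ` {0..<3}"
    using weight colours by (auto simp: lex_V)
  then have "card (?w ` lex_V V (empty_V n)) \<le> card (W ` {0..<3})"
    by (rule card_mono[rotated]) simp
  also have "\<dots> \<le> 3"
    using card_image_le[of "{0..<3}" W] by simp
  finally show "card (?w ` lex_V V (empty_V n)) \<le> 3" .
qed

lemma ex_ld_antimagic_lex_empty_three_weights: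
  assumes "simple_graph V E" "n > 0" "even n" "r \<ge> 1" "V \<noteq> {}"
    and c: "proper_coloring V E c 3" and split: "\<forall>v\<in>V. nbhd_two_colours V E c r v"
  obtains f where "ld_antimagic (lex_V V (empty_V n)) (lex_E E empty_E) f"
    and "card (weight (lex_V V (empty_V n)) (lex_E E empty_E) f ` lex_V V (empty_V n)) \<le> 3"
proof -
  have "finite V" using assms(1) by (simp add: simple_graph_def)
  obtain v where "v \<in> V" using \<open>V \<noteq> {}\<close> by blast
  have colours: "\<forall>u\<in>V. c u < 3" using c by (simp add: proper_coloring_def)
  have "\<exists>u\<in>V. c u = 1" "\<exists>u\<in>V. c u = 2"
    using nbhd_two_colours_all_colours_occur[OF c _ assms(4) \<open>v \<in> V\<close>] split \<open>v \<in> V\<close>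
    by simp_all
  then obtain f S where "bij_betw f (V \<times> {0..<n}) {1..n * card V}"
    "\<forall>u\<in>V. (\<Sum>j<n. f (u, j)) = S (c u)" "inj_on S {0..<3}"
    using ex_labelling_colour_column_sums[OF \<open>finite V\<close> colours _ _ assms(2,3)] by blast
  from ld_antimagic_lex_empty_of_colour_column_sums[OF assms(1) c assms(4) split this]
  show ?thesis by (rule that)
qed

theorem mainTheorem12:
  fixes V :: "'a set" and E :: "'a \<Rightarrow> 'a \<Rightarrow> bool" and n r m :: nat
  assumes "simple_graph V E"
    and "n > 0" and "even n"
    and "r \<ge> 1" and "regular V E (2 * r)"
    and "card V = m"
    and "chromatic_number V E = 3"
    and "\<exists>c. proper_coloring V E c 3 \<and>
           (\<forall>v\<in>V. \<exists>a b. a \<noteq> b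
              \<and> nbhd V E v = {u \<in> nbhd V E v. c u = a} \<union> {u \<in> nbhd V E v. c u = b}
              \<and> card {u \<in> nbhd V E v. c u = a} = r
              \<and> card {u \<in> nbhd V E v. c u = b} = r)"
  shows "chi_ld (lex_V V (empty_V n)) (lex_E E empty_E) = 3"
proof -
  (* Regularity follows from the neighbourhood condition. *)
  obtain c where c: "proper_coloring V E c 3" and split: "\<forall>v\<in>V. nbhd_two_colours V E c r v"
    using assms(8) unfolding nbhd_two_colours_def by blast
  have "V \<noteq> {}" using chromatic_number_empty[of E c 3] c assms(7) by auto
  obtain f where f: "ld_antimagic (lex_V V (empty_V n)) (lex_E E empty_E) f"
    and "card (weight (lex_V V (empty_V n)) (lex_E E empty_E) f ` lex_V V (empty_V n)) \<le> 3"
    using ex_ld_antimagic_lex_empty_three_weights[OF assms(1-4) \<open>V \<noteq> {}\<close> c split] by blast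
  have lower: "3 \<le> card (weight (lex_V V (empty_V n)) (lex_E E empty_E) g ` lex_V V (empty_V n))"
    if "ld_antimagic (lex_V V (empty_V n)) (lex_E E empty_E) g" for g
    using chromatic_number_le_card_weights_lex_empty[OF assms(1,2) that] assms(7) by simp
  have "finite (lex_V V (empty_V n))"
    using assms(1) by (simp add: simple_graph_def lex_V_def empty_V_def)
  moreover have "card (weight (lex_V V (empty_V n)) (lex_E E empty_E) f ` lex_V V (empty_V n)) = 3"
    using \<open>card _ \<le> 3\<close> lower[OF f] by linarith
  ultimately show ?thesis using f lower by (intro chi_ld_eqI)
qed

end
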